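(* Let $q=2^n$ be such that $q-1$ is prime. Then there exists a linear $(q-3,q-1,q)$-AONT over $\mathbb{F}_q$, i.e. an invertible $(q-1)\times(q-1)$ matrix over $\mathbb{F}_q$ all of whose $(q-3)\times(q-3)$ submatrices are invertible.
   Context: A linear $(t,s,q)$-AONT over $\mathbb{F}_q$ is given by an invertible $s\times s$ matrix $M$ over $\mathbb{F}_q$ (transform $(y_1,\dots,y_s)=(x_1,\dots,x_s)M^{-1}$); $M$ defines a linear $(t,s,q)$-AONT iff every $t\times t$ submatrix of $M$ is invertible (a $0\times0$ submatrix counts as invertible). *)

theory Defs
  imports "Jordan_Normal_Form.DL_Submatrix" "HOL-Computational_Algebra.Primes"
begin

definition linear_AONT :: "nat \<Rightarrow> nat \<Rightarrow> 'a::field mat \<Rightarrow> bool" where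
  "linear_AONT t s M \<longleftrightarrow>
     M \<in> carrier_mat s s \<and> invertible_mat M \<and>
     (\<forall>I J. I \<subseteq> {..<s} \<longrightarrow> J \<subseteq> {..<s} \<longrightarrow> card I = t \<longrightarrow> card J = t \<longrightarrow>
        invertible_mat (submatrix M I J))"

end

theory Submission
  imports Defs "Jordan_Normal_Form.Determinant" "HOL-Number_Theory.Cong"
begin

(* Let p = q - 1 be prime and \<omega> any element of F_q other than 0 and 1. By Fermat \<omega>^p = 1,
   and as p is prime \<omega> has order exactly p, so M = (\<omega>^(ij))_{i,j<p} is a discrete Fourier
   transform matrix; it is invertible because p = -1 is a unit in F_q.
   Deleting rows r1, r2 and columns c1, c2 of M gives a singular matrix iff some x \<noteq> 0
   vanishing at c1, c2 has Mx supported on {r1, r2}. Inverting the transform, x is then a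
   combination of the two rows r1, r2 of the inverse matrix (\<omega>^(-ij)) vanishing at c1 and c2,
   which is impossible since their 2 x 2 minor \<omega>^(-(r1 c1 + r2 c2)) - \<omega>^(-(r2 c1 + r1 c2)) is
   nonzero: it would force p to divide (r1 - r2)(c1 - c2). *)

lemma of_nat_card_eq_0: "of_nat (card (UNIV :: 'a set)) = (0 :: 'a::{finite,ring_1})"
proof -
  have "(\<Sum>x\<in>UNIV. x) = (\<Sum>x\<in>UNIV. x + (1::'a))"
    by (rule sum.reindex_bij_witness[of _ "\<lambda>x. x + 1" "\<lambda>x. x - 1"]) auto
  then show ?thesis by (simp add: sum.distrib)
qed

lemma power_card_minus_one_eq_1:
  fixes x :: "'a::{finite,field}"
  assumes "x \<noteq> 0"
  shows "x ^ (card (UNIV :: 'a set) - 1) = 1"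
proof -
  have "(\<Prod>y\<in>UNIV-{0}. x * y) = (\<Prod>y\<in>UNIV-{0}. y)"
    by (rule prod.reindex_bij_witness[of _ "\<lambda>y. y / x" "\<lambda>y. x * y"]) (use assms in auto)
  moreover have "(\<Prod>y\<in>UNIV-{0}. x * y) = x ^ (card (UNIV :: 'a set) - 1) * (\<Prod>y\<in>UNIV-{0::'a}. y)"
    by (simp add: prod.distrib card_Diff_singleton)
  moreover have "(\<Prod>y\<in>UNIV-{0::'a}. y) \<noteq> 0"
    by simp
  ultimately show ?thesis
    by simp
qed

lemma prime_root_of_unity_power_eq_1_iff:
  fixes \<omega> :: "'a::field"
  assumes "prime p" "\<omega> ^ p = 1" "\<omega> \<noteq> 1"
  shows "\<omega> ^ m = 1 \<longleftrightarrow> p dvd m"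
proof
  assume "\<omega> ^ m = 1"
  show "p dvd m"
  proof (rule ccontr)
    assume "\<not> p dvd m"
    then have "m \<noteq> 0" "coprime m p"
      using assms(1) prime_imp_coprime coprime_commute by (metis dvd_0_right)+
    then obtain x y where "m * x = p * y + 1"
      using bezout_nat[of m p] by auto
    then have "\<omega> ^ (m * x) = \<omega> ^ (p * y) * \<omega>"
      by (simp add: power_add)
    with \<open>\<omega> ^ m = 1\<close> assms(2,3) show False
      by (simp add: power_mult)
  qed
qed (use assms(2) in \<open>auto simp: power_mult\<close>)

lemma prime_root_of_unity_power_eq_iff:
  fixes \<omega> :: "'a::field"
  assumes "prime p" "\<omega> ^ p = 1" "\<omega> \<noteq> 1"
  shows "\<omega> ^ m = \<omega> ^ k \<longleftrightarrow> [m = k] (mod p)"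
proof -
  have "\<omega> \<noteq> 0"
    using assms(1,2) prime_gt_0_nat by (auto simp: power_0_left)
  have ordered: "\<omega> ^ m = \<omega> ^ k \<longleftrightarrow> [m = k] (mod p)" if "m \<le> k" for m k
  proof -
    have "\<omega> ^ k = \<omega> ^ m * \<omega> ^ (k - m)"
      using that by (simp flip: power_add)
    then have "\<omega> ^ m = \<omega> ^ k \<longleftrightarrow> \<omega> ^ (k - m) = 1"
      using \<open>\<omega> \<noteq> 0\<close> by auto
    also have "\<dots> \<longleftrightarrow> [k = m] (mod p)"
      using prime_root_of_unity_power_eq_1_iff[OF assms] cong_diff_iff_cong_0_nat[OF that]
      by (simp add: cong_0_iff)
    finally show ?thesis
      by (simp add: cong_sym_eq)
  qed
  show ?thesis
    using ordered[of m k] ordered[of k m] by (cases "m \<le> k") (auto simp: cong_sym_eq)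
qed

lemma prime_root_of_unity_minor_2_nonzero:
  fixes \<omega> :: "'a::field"
  assumes "prime p" "\<omega> ^ p = 1" "\<omega> \<noteq> 1"
    and "r1 < p" "r2 < p" "r1 \<noteq> r2" "c1 < p" "c2 < p" "c1 \<noteq> c2"
  shows "\<omega> ^ (r1 * c1) * \<omega> ^ (r2 * c2) \<noteq> \<omega> ^ (r2 * c1) * \<omega> ^ (r1 * c2)"
proof
  assume "\<omega> ^ (r1 * c1) * \<omega> ^ (r2 * c2) = \<omega> ^ (r2 * c1) * \<omega> ^ (r1 * c2)"
  then have "\<omega> ^ (r1 * c1 + r2 * c2) = \<omega> ^ (r2 * c1 + r1 * c2)"
    by (simp add: power_add)
  then have "[r1 * c1 + r2 * c2 = r2 * c1 + r1 * c2] (mod p)"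
    using prime_root_of_unity_power_eq_iff[OF assms(1-3)] by blast
  then have "int p dvd (int r1 - int r2) * (int c1 - int c2)"
    by (simp flip: cong_int_iff add: cong_iff_dvd_diff algebra_simps)
  then have "int p dvd int r1 - int r2 \<or> int p dvd int c1 - int c2"
    using assms(1) by (simp add: prime_dvd_mult_iff)
  moreover have "\<not> int p dvd int a - int b" if "a < p" "b < p" "a \<noteq> b" for a b
    using that dvd_imp_le_int[of "int a - int b" "int p"] by auto
  ultimately show False
    using assms(4-9) by blast
qed

definition dft :: "nat \<Rightarrow> 'a::field \<Rightarrow> (nat \<Rightarrow> 'a) \<Rightarrow> nat \<Rightarrow> 'a" where
  "dft p \<omega> x i = (\<Sum>k<p. \<omega> ^ (i * k) * x k)"

lemma dft_orthogonality:
  fixes \<omega> :: "'a::field"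
  assumes "prime p" "\<omega> ^ p = 1" "\<omega> \<noteq> 1" "j < p" "k < p"
  shows "(\<Sum>i<p. inverse \<omega> ^ (i * j) * \<omega> ^ (i * k)) = (if j = k then of_nat p else 0)"
proof -
  define g where "g = inverse \<omega> ^ j * \<omega> ^ k"
  have "\<omega> \<noteq> 0"
    using assms(1,2) prime_gt_0_nat by (auto simp: power_0_left)
  have terms: "inverse \<omega> ^ (i * j) * \<omega> ^ (i * k) = g ^ i" for i
    by (simp add: g_def power_mult_distrib mult.commute[of i] power_mult)
  have "g ^ p = inverse ((\<omega> ^ p) ^ j) * (\<omega> ^ p) ^ k"
    by (simp add: g_def power_mult_distrib power_inverse mult.commute[of _ p] flip: power_mult)
  then have "g ^ p = 1"
    using assms(2) by simp
  have "g = 1 \<longleftrightarrow> \<omega> ^ j = \<omega> ^ k"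
    using \<open>\<omega> \<noteq> 0\<close> by (auto simp: g_def power_inverse field_simps)
  also have "\<dots> \<longleftrightarrow> j = k"
    using prime_root_of_unity_power_eq_iff[OF assms(1-3)] assms(4,5)
    by (simp add: cong_def)
  finally show ?thesis
    using \<open>g ^ p = 1\<close> by (simp add: terms sum_gp_strict)
qed

lemma dft_inversion:
  fixes \<omega> :: "'a::field"
  assumes "prime p" "\<omega> ^ p = 1" "\<omega> \<noteq> 1" "j < p"
  shows "of_nat p * x j = (\<Sum>i<p. inverse \<omega> ^ (i * j) * dft p \<omega> x i)"
proof -
  have "(\<Sum>i<p. inverse \<omega> ^ (i * j) * dft p \<omega> x i)
      = (\<Sum>i<p. \<Sum>k<p. x k * (inverse \<omega> ^ (i * j) * \<omega> ^ (i * k)))"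
    by (simp add: dft_def sum_distrib_left mult_ac)
  also have "\<dots> = (\<Sum>k<p. x k * (\<Sum>i<p. inverse \<omega> ^ (i * j) * \<omega> ^ (i * k)))"
    by (subst sum.swap) (simp add: sum_distrib_left)
  also have "\<dots> = (\<Sum>k<p. if k = j then of_nat p * x j else 0)"
    by (rule sum.cong) (use dft_orthogonality[OF assms(1-4)] in auto)
  also have "\<dots> = of_nat p * x j"
    using assms(4) by simp
  finally show ?thesis ..
qed

lemma homogeneous_system_2_trivial:
  fixes a b u1 v1 u2 v2 :: "'a::field"
  assumes "u1 * a + v1 * b = 0" "u2 * a + v2 * b = 0" "u1 * v2 \<noteq> v1 * u2"
  shows "a = 0" "b = 0"
proof -
  have "a * (u1 * v2 - v1 * u2) = (u1 * a + v1 * b) * v2 - (u2 * a + v2 * b) * v1"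
    "b * (u1 * v2 - v1 * u2) = (u2 * a + v2 * b) * u1 - (u1 * a + v1 * b) * u2"
    by (simp_all add: algebra_simps)
  then have "a * (u1 * v2 - v1 * u2) = 0" "b * (u1 * v2 - v1 * u2) = 0"
    by (simp_all only: assms(1,2) mult_zero_left diff_self)
  then show "a = 0" "b = 0"
    using assms(3) by simp_all
qed

lemma eq_0_if_two_zeros_and_dft_support_two:
  fixes \<omega> :: "'a::field"
  assumes root: "prime p" "\<omega> ^ p = 1" "\<omega> \<noteq> 1" and p: "of_nat p \<noteq> (0::'a)"
    and r: "r1 < p" "r2 < p" "r1 \<noteq> r2" and c: "c1 < p" "c2 < p" "c1 \<noteq> c2"
    and zeros: "x c1 = 0" "x c2 = 0"
    and support: "\<And>i. i < p \<Longrightarrow> i \<noteq> r1 \<Longrightarrow> i \<noteq> r2 \<Longrightarrow> dft p \<omega> x i = 0"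
    and "j < p"
  shows "x j = 0"
proof -
  define b where "b = inverse \<omega>"
  define y where "y = dft p \<omega> x"
  have b: "b ^ p = 1" "b \<noteq> 1"
    using root(2,3) by (auto simp: b_def power_inverse)
  have reconstruction: "of_nat p * x j' = b ^ (r1 * j') * y r1 + b ^ (r2 * j') * y r2"
    if "j' < p" for j'
  proof -
    have "of_nat p * x j' = (\<Sum>i<p. b ^ (i * j') * y i)"
      using dft_inversion[OF root that] by (simp add: b_def y_def)
    also have "\<dots> = (\<Sum>i\<in>{r1, r2}. b ^ (i * j') * y i)"
      by (rule sum.mono_neutral_right) (use r(1,2) support in \<open>auto simp: y_def\<close>)
    finally show ?thesis
      using r(3) by simp
  qed
  have "b ^ (r1 * c1) * y r1 + b ^ (r2 * c1) * y r2 = 0"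
    "b ^ (r1 * c2) * y r1 + b ^ (r2 * c2) * y r2 = 0"
    using reconstruction[OF c(1)] reconstruction[OF c(2)] zeros by simp_all
  moreover have "b ^ (r1 * c1) * b ^ (r2 * c2) \<noteq> b ^ (r2 * c1) * b ^ (r1 * c2)"
    using prime_root_of_unity_minor_2_nonzero[OF root(1) b r c] .
  ultimately have "y r1 = 0" "y r2 = 0"
    using homogeneous_system_2_trivial by blast+
  then show ?thesis
    using reconstruction[OF \<open>j < p\<close>] p by simp
qed

lemma invertible_mat_if_kernel_trivial:
  fixes A :: "'a::field mat"
  assumes A: "A \<in> carrier_mat n n"
    and kernel: "\<And>v. v \<in> carrier_vec n \<Longrightarrow> A *\<^sub>v v = 0\<^sub>v n \<Longrightarrow> v = 0\<^sub>v n"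
  shows "invertible_mat A"
proof -
  have "det A \<noteq> 0"
    using det_0_iff_vec_prod_zero_field[OF A] kernel by blast
  then obtain B where "B \<in> carrier_mat n n" "B * A = 1\<^sub>m n" "A * B = 1\<^sub>m n"
    using det_non_zero_imp_unit[OF A] unfolding Units_def ring_mat_def by auto
  then show ?thesis
    using A unfolding invertible_mat_def inverts_mat_def by auto
qed

lemma bij_betw_pick:
  assumes "finite J"
  shows "bij_betw (pick J) {..<card J} J"
proof (rule bij_betw_imageI)
  show "inj_on (pick J) {..<card J}"
    by (rule inj_onI) (metis card_pick_le lessThan_iff)
  show "pick J ` {..<card J} = J"
  proof
    show "pick J ` {..<card J} \<subseteq> J"
      using pick_in_set_le by auto
    show "J \<subseteq> pick J ` {..<card J}"
    proof
      fix j assume "j \<in> J"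
      then have "card {a \<in> J. a < j} \<in> {..<card J}"
        using assms \<open>j \<in> J\<close> by (auto intro!: psubset_card_mono)
      then show "j \<in> pick J ` {..<card J}"
        using pick_card_in_set[OF \<open>j \<in> J\<close>] by (rule rev_image_eqI[OF _ sym])
    qed
  qed
qed

lemma mult_mat_vec_index_sum:
  assumes "A \<in> carrier_mat n m" "v \<in> carrier_vec m" "i < n"
  shows "(A *\<^sub>v v) $ i = (\<Sum>k<m. A $$ (i, k) * v $ k)"
  using assms by (simp add: scalar_prod_def atLeast0LessThan)

lemma invertible_submatrixI:
  fixes M :: "'a::field mat"
  assumes M: "M \<in> carrier_mat n n" and I: "I \<subseteq> {..<n}" and J: "J \<subseteq> {..<n}"
    and card: "card I = card J"
    and kernel: "\<And>x. x \<in> carrier_vec n \<Longrightarrow> (\<And>k. k < n \<Longrightarrow> k \<notin> J \<Longrightarrow> x $ k = 0) \<Longrightarrow>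
      (\<And>i. i \<in> I \<Longrightarrow> (M *\<^sub>v x) $ i = 0) \<Longrightarrow> x = 0\<^sub>v n"
  shows "invertible_mat (submatrix M I J)"
proof -
  let ?m = "card J" and ?S = "submatrix M I J"
  have "finite I" "finite J"
    using I J finite_subset by auto
  have rows: "{i. i < dim_row M \<and> i \<in> I} = I" and cols: "{j. j < dim_col M \<and> j \<in> J} = J"
    using M I J by auto
  have S: "?S \<in> carrier_mat ?m ?m"
    using card by (intro carrier_matI) (simp_all add: dim_submatrix rows cols)
  show ?thesis
  proof (rule invertible_mat_if_kernel_trivial[OF S])
    fix v assume v: "v \<in> carrier_vec ?m" and Sv: "?S *\<^sub>v v = 0\<^sub>v ?m"
    define x where "x = vec n (\<lambda>k. if k \<in> J then v $ card {a \<in> J. a < k} else 0)"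
    have x: "x \<in> carrier_vec n"
      by (simp add: x_def)
    have x_pick: "x $ pick J k = v $ k" if "k < ?m" for k
      using that J pick_in_set_le[OF that] card_pick_le[OF that] by (auto simp: x_def)
    have "x = 0\<^sub>v n"
    proof (rule kernel[OF x])
      show "x $ k = 0" if "k < n" "k \<notin> J" for k
        using that by (simp add: x_def)
      fix i assume "i \<in> I"
      define r where "r = card {a \<in> I. a < i}"
      have "r < card I"
        unfolding r_def using \<open>i \<in> I\<close> \<open>finite I\<close> by (intro psubset_card_mono) auto
      then have r: "r < ?m" "pick I r = i"
        using card pick_card_in_set[OF \<open>i \<in> I\<close>] by (simp_all add: r_def)
      have "(M *\<^sub>v x) $ i = (\<Sum>k<n. M $$ (i, k) * x $ k)"
        using mult_mat_vec_index_sum[OF M x] I \<open>i \<in> I\<close> by blast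
      also have "\<dots> = (\<Sum>k\<in>J. M $$ (i, k) * x $ k)"
        by (rule sum.mono_neutral_right) (use J in \<open>auto simp: x_def\<close>)
      also have "\<dots> = (\<Sum>k<?m. M $$ (i, pick J k) * x $ pick J k)"
        using sum.reindex_bij_betw[OF bij_betw_pick[OF \<open>finite J\<close>], of "\<lambda>k. M $$ (i, k) * x $ k"]
        by simp
      also have "\<dots> = (\<Sum>k<?m. ?S $$ (r, k) * v $ k)"
      proof (rule sum.cong)
        fix k assume "k \<in> {..<?m}"
        then show "M $$ (i, pick J k) * x $ pick J k = ?S $$ (r, k) * v $ k"
          using submatrix_index[of r M I k J] r card x_pick by (simp add: rows cols)
      qed simp
      also have "\<dots> = (?S *\<^sub>v v) $ r"
        using mult_mat_vec_index_sum[OF S v r(1)] ..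
      finally show "(M *\<^sub>v x) $ i = 0"
        using Sv r(1) by simp
    qed
    show "v = 0\<^sub>v ?m"
    proof (rule eq_vecI)
      fix k assume "k < dim_vec (0\<^sub>v ?m :: 'a vec)"
      then have "k < ?m"
        by simp
      then have "pick J k < n"
        using pick_in_set_le J by blast
      then show "v $ k = 0\<^sub>v ?m $ k"
        using x_pick[OF \<open>k < ?m\<close>] \<open>x = 0\<^sub>v n\<close> \<open>k < ?m\<close> by simp
    qed (use v in simp)
  qed
qed

definition dft_mat :: "nat \<Rightarrow> 'a::field \<Rightarrow> 'a mat" where
  "dft_mat p \<omega> = mat p p (\<lambda>(i, k). \<omega> ^ (i * k))"

lemma dft_mat_carrier: "dft_mat p \<omega> \<in> carrier_mat p p"
  by (simp add: dft_mat_def)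

lemma dft_mat_mult_vec:
  assumes "x \<in> carrier_vec p" "i < p"
  shows "(dft_mat p \<omega> *\<^sub>v x) $ i = dft p \<omega> (\<lambda>k. x $ k) i"
proof -
  have "(dft_mat p \<omega> *\<^sub>v x) $ i = (\<Sum>k<p. dft_mat p \<omega> $$ (i, k) * x $ k)"
    by (rule mult_mat_vec_index_sum[OF dft_mat_carrier assms])
  also have "\<dots> = dft p \<omega> (\<lambda>k. x $ k) i"
    unfolding dft_def by (rule sum.cong) (simp_all add: dft_mat_def assms(2))
  finally show ?thesis .
qed

lemma invertible_dft_mat:
  fixes \<omega> :: "'a::field"
  assumes "prime p" "\<omega> ^ p = 1" "\<omega> \<noteq> 1" "of_nat p \<noteq> (0::'a)"
  shows "invertible_mat (dft_mat p \<omega>)"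
proof (rule invertible_mat_if_kernel_trivial[OF dft_mat_carrier])
  fix x assume x: "x \<in> carrier_vec p" and "dft_mat p \<omega> *\<^sub>v x = 0\<^sub>v p"
  then have "dft p \<omega> (\<lambda>k. x $ k) i = 0" if "i < p" for i
    using dft_mat_mult_vec[OF x that] that by (metis index_zero_vec(1))
  then have "of_nat p * x $ j = 0" if "j < p" for j
    using dft_inversion[OF assms(1-3) that, of "\<lambda>k. x $ k"] by simp
  then show "x = 0\<^sub>v p"
    using x assms(4) by (intro eq_vecI) auto
qed

lemma obtain_complement_pair:
  assumes "I \<subseteq> {..<p}" "card I = p - 2" "p \<ge> 2"
  obtains r1 r2 where "r1 < p" "r2 < p" "r1 \<noteq> r2" "r1 \<notin> I" "r2 \<notin> I"
    "\<And>i. i < p \<Longrightarrow> i \<notin> I \<Longrightarrow> i = r1 \<or> i = r2"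
proof -
  have "card ({..<p} - I) = 2"
    using card_Diff_subset[OF finite_subset[OF assms(1)] assms(1)] assms(2,3) by simp
  then obtain r1 r2 where R: "{..<p} - I = {r1, r2}" "r1 \<noteq> r2"
    by (meson card_2_iff)
  then have mem: "i \<in> {..<p} - I \<longleftrightarrow> i = r1 \<or> i = r2" for i
    by simp
  show thesis
  proof (rule that[OF _ _ R(2)])
    show "r1 < p" "r2 < p" "r1 \<notin> I" "r2 \<notin> I"
      using mem[of r1] mem[of r2] by simp_all
    show "i = r1 \<or> i = r2" if "i < p" "i \<notin> I" for i
      using mem[of i] that by simp
  qed
qed

lemma invertible_submatrix_dft_mat:
  fixes \<omega> :: "'a::field"
  assumes "prime p" "\<omega> ^ p = 1" "\<omega> \<noteq> 1" "of_nat p \<noteq> (0::'a)"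
    and I: "I \<subseteq> {..<p}" "card I = p - 2" and J: "J \<subseteq> {..<p}" "card J = p - 2"
  shows "invertible_mat (submatrix (dft_mat p \<omega>) I J)"
proof (rule invertible_submatrixI[OF dft_mat_carrier I(1) J(1)])
  show "card I = card J"
    using I(2) J(2) by simp
  have "p \<ge> 2"
    using assms(1) prime_ge_2_nat by blast
  obtain r1 r2 where r: "r1 < p" "r2 < p" "r1 \<noteq> r2"
    and I_complement: "\<And>i. i < p \<Longrightarrow> i \<notin> I \<Longrightarrow> i = r1 \<or> i = r2"
    using obtain_complement_pair[OF I \<open>p \<ge> 2\<close>] by metis
  obtain c1 c2 where c: "c1 < p" "c2 < p" "c1 \<noteq> c2" "c1 \<notin> J" "c2 \<notin> J"
    using obtain_complement_pair[OF J \<open>p \<ge> 2\<close>] by metis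
  fix x assume x: "x \<in> carrier_vec p"
    and supp: "\<And>k. k < p \<Longrightarrow> k \<notin> J \<Longrightarrow> x $ k = 0"
    and Mx: "\<And>i. i \<in> I \<Longrightarrow> (dft_mat p \<omega> *\<^sub>v x) $ i = 0"
  have "x $ j = 0" if "j < p" for j
  proof (rule eq_0_if_two_zeros_and_dft_support_two[OF assms(1-4) r c(1-3)])
    show "x $ c1 = 0" "x $ c2 = 0"
      using c supp by simp_all
    show "dft p \<omega> (\<lambda>k. x $ k) i = 0" if "i < p" "i \<noteq> r1" "i \<noteq> r2" for i
    proof -
      have "i \<in> I"
        using I_complement[OF that(1)] that(2,3) by blast
      then show ?thesis
        using dft_mat_mult_vec[OF x that(1), of \<omega>] Mx by simp
    qed
  qed fact
  then show "x = 0\<^sub>v p"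
    using x by (intro eq_vecI) auto
qed

lemma linear_AONT_dft_mat:
  fixes \<omega> :: "'a::field"
  assumes "prime p" "\<omega> ^ p = 1" "\<omega> \<noteq> 1" "of_nat p \<noteq> (0::'a)"
  shows "linear_AONT (p - 2) p (dft_mat p \<omega>)"
  unfolding linear_AONT_def
  using dft_mat_carrier invertible_dft_mat[OF assms] invertible_submatrix_dft_mat[OF assms]
  by blast

theorem corollary2p28:
  fixes n :: nat
  assumes "card (UNIV :: 'a::{field,finite} set) = 2 ^ n"
    and "prime (card (UNIV :: 'a set) - 1)"
  shows "\<exists>M :: 'a mat. linear_AONT (card (UNIV :: 'a set) - 3) (card (UNIV :: 'a set) - 1) M"
proof -
  define p where "p = card (UNIV :: 'a set) - 1"
  have "prime p"
    using assms(2) by (simp add: p_def)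
  then have "p \<ge> 2"
    using prime_ge_2_nat by blast
  then have q: "card (UNIV :: 'a set) = p + 1"
    by (simp add: p_def)
  have "of_nat p = (- 1 :: 'a)"
    using of_nat_card_eq_0[where 'a = 'a] q by (simp add: eq_neg_iff_add_eq_0 add.commute)
  have "\<not> UNIV \<subseteq> {0, 1 :: 'a}"
    using card_mono[of "{0, 1 :: 'a}" UNIV] q \<open>p \<ge> 2\<close> by auto
  then obtain \<omega> :: 'a where "\<omega> \<noteq> 0" "\<omega> \<noteq> 1"
    by blast
  then have "\<omega> ^ p = 1"
    using power_card_minus_one_eq_1 by (simp add: p_def)
  then have "linear_AONT (p - 2) p (dft_mat p \<omega>)"
    using \<open>prime p\<close> \<open>\<omega> \<noteq> 1\<close> \<open>of_nat p = - 1\<close> by (intro linear_AONT_dft_mat) simp_all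
  moreover have "card (UNIV :: 'a set) - 3 = p - 2"
    using q by simp
  ultimately show ?thesis
    by (auto simp: p_def)
qed

end
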